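(* Let $X$ be a real random variable with density $p$, $\mathbb{E}X=0$, $\mathrm{Var}(X)=1$, $\mathbb{E}|X|^s<\infty$ for some $s>2$, and suppose $\|p-\phi\|_2\le1$. Then there exist $C_1,C_2>0$ such that \[ D(X)\le (C_1+\|p-\phi\|_\infty)\big(\|p-\phi\|_1+\|p-\phi\|_2\big)+C_2(\mathbb{E}|X|^s)^{2/s}\big(\|p-\phi\|_1+\|p-\phi\|_2\big)^{1-2/s}. \]
   Context: $\phi(x)=(2\pi)^{-1/2}e^{-x^2/2}$. $D(X)$ denotes the Kullback–Leibler divergence of $X$ from a Gaussian with the same mean and variance as $X$; here $D(X)=\int p\ln(p/\phi)$. $\|\cdot\|_q$ is the $L^q(\mathbb{R})$ norm. *)

theory Defs
  imports "HOL-Probability.Probability"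
begin

definition phi :: "real \<Rightarrow> real" where
  "phi x = exp (- (x ^ 2) / 2) / sqrt (2 * pi)"

definition ext_integral :: "(real \<Rightarrow> real) \<Rightarrow> ereal" where
  "ext_integral g = enn2ereal (\<integral>\<^sup>+ x. ennreal (g x) \<partial>lborel)
                    - enn2ereal (\<integral>\<^sup>+ x. ennreal (- g x) \<partial>lborel)"

text \<open>D(X) = int p ln(p/phi) (with 0 ln 0 = 0, as ln 0 = 0 in Isabelle).\<close>
definition KL_div :: "(real \<Rightarrow> real) \<Rightarrow> ereal" where
  "KL_div p = ext_integral (\<lambda>x. p x * ln (p x / phi x))"

definition Lq_norm :: "real \<Rightarrow> (real \<Rightarrow> real) \<Rightarrow> ereal" where
  "Lq_norm q f = (let I = (\<integral>\<^sup>+ x. ennreal (\<bar>f x\<bar> powr q) \<partial>lborel) in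
     if I = \<infinity> then \<infinity> else ereal ((enn2real I) powr (1 / q)))"

definition Linf_norm :: "(real \<Rightarrow> real) \<Rightarrow> ereal" where
  "Linf_norm f = esssup lborel (\<lambda>x. ereal \<bar>f x\<bar>)"

end

theory Submission
  imports Defs
begin

text \<open>
  Pointwise, \<open>p ln (p/\<phi>) \<le> (p - \<phi>)\<^sub>+ (p - ln \<phi>)\<close>, and
  \<open>p - ln \<phi> = p + x\<^sup>2/2 + ln \<surd>(2\<pi>)\<close> with \<open>p \<le> 1 + \<parallel>p - \<phi>\<parallel>\<^sub>\<infinity>\<close>.
  The only unbounded term \<open>x\<^sup>2\<close> is split at a level \<open>R\<close>:
  \<open>x\<^sup>2 \<le> R\<^sup>2 + |x|\<^sup>s R\<^bsup>2-s\<^esup>\<close>; the first part is charged to \<open>\<parallel>p - \<phi>\<parallel>\<^sub>1\<close>, the second,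
  using \<open>(p - \<phi>)\<^sub>+ \<le> p\<close>, to the moment \<open>M = E|X|\<^sup>s\<close>.  With \<open>\<delta> = \<parallel>p - \<phi>\<parallel>\<^sub>1 + \<parallel>p - \<phi>\<parallel>\<^sub>2\<close>,
  the choice \<open>R = (M/\<delta>)\<^bsup>1/s\<^esup>\<close> balances both terms to \<open>M\<^bsup>2/s\<^esup> \<delta>\<^bsup>1-2/s\<^esup>\<close>.
\<close>

lemma phi_pos: "0 < phi x"
  unfolding phi_def by simp

lemma phi_le_one: "phi x \<le> 1"
proof -
  have "exp (- (x^2) / 2) / sqrt (2 * pi) \<le> 1 / 1"
    using pi_gt3 by (intro frac_le) auto
  then show ?thesis unfolding phi_def by simp
qed

lemma ln_phi: "ln (phi x) = - (x^2 / 2) - ln (sqrt (2 * pi))"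
  unfolding phi_def by (subst ln_div) auto

lemma integrable_phi: "integrable lborel phi"
proof -
  have "phi = std_normal_density"
    by (simp add: fun_eq_iff phi_def std_normal_density_def)
  then show ?thesis using integrable_std_normal_moment[of 0] by simp
qed

lemma Lq_norm_1_eq_integral:
  assumes "integrable lborel f"
  shows "Lq_norm 1 f = ereal (\<integral>x. \<bar>f x\<bar> \<partial>lborel)"
proof -
  have "(\<integral>\<^sup>+ x. ennreal (\<bar>f x\<bar> powr 1) \<partial>lborel) = ennreal (\<integral>x. \<bar>f x\<bar> \<partial>lborel)"
    using assms by (simp add: nn_integral_eq_integral)
  then show ?thesis unfolding Lq_norm_def Let_def by simp
qed

lemma Lq_norm_finite:
  assumes "Lq_norm q f \<noteq> \<infinity>"
  obtains N where "0 \<le> N" "Lq_norm q f = ereal N"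
  using assms that[OF powr_ge_zero] unfolding Lq_norm_def Let_def by (auto split: if_splits)

lemma AE_le_Linf_norm: "AE x in lborel. ereal \<bar>f x\<bar> \<le> Linf_norm f"
  unfolding Linf_norm_def by (rule esssup_AE)

lemma Linf_norm_nonneg: "0 \<le> Linf_norm f"
proof -
  have "ae_filter lborel \<noteq> bot" by (simp add: ae_filter_eq_bot_iff)
  then obtain x where "ereal \<bar>f x\<bar> \<le> Linf_norm f"
    using eventually_happens[OF AE_le_Linf_norm] by blast
  then show ?thesis by (rule order_trans[rotated]) simp
qed

lemma mult_ln_divide_le:
  fixes p q :: real
  assumes "0 \<le> p" "0 < q"
  shows "p * ln (p / q) \<le> max 0 (p - q) * (p - ln q)"
proof (cases "p \<le> q")
  case True
  have "p * ln (p / q) \<le> 0"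
  proof (cases "p = 0")
    case False
    then have "ln (p / q) \<le> 0" using True assms by simp
    then show ?thesis using assms(1) by (simp add: mult_nonneg_nonpos)
  qed simp
  then show ?thesis using True by simp
next
  case False
  then have "0 < p" using assms by simp
  have "q * ln (p / q) \<le> q * (p / q - 1)"
    using ln_le_minus_one[of "p / q"] \<open>0 < p\<close> assms by (simp add: mult_left_mono)
  also have "\<dots> = p - q" using assms by (simp add: field_simps)
  finally have "p * ln (p / q) \<le> (p - q) * (1 + ln (p / q))" by (simp add: algebra_simps)
  also have "\<dots> = (p - q) * (1 + ln p - ln q)" using \<open>0 < p\<close> assms by (simp add: ln_div)
  also have "\<dots> \<le> (p - q) * (p - ln q)"
    using ln_le_minus_one[of p] \<open>0 < p\<close> False by (intro mult_left_mono) auto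
  finally show ?thesis using False by simp
qed

lemma power2_le_truncation_bound:
  fixes x R s :: real
  assumes "0 < R" "2 \<le> s"
  shows "x^2 \<le> R^2 + \<bar>x\<bar> powr s * R powr (2 - s)"
proof (cases "\<bar>x\<bar> \<le> R")
  case True
  then have "x^2 \<le> R^2" by (metis abs_ge_zero power2_abs power_mono)
  then show ?thesis by (smt (verit) mult_nonneg_nonneg powr_ge_zero)
next
  case False
  then have "0 < \<bar>x\<bar>" using assms by simp
  have "x^2 = \<bar>x\<bar> powr s * \<bar>x\<bar> powr (2 - s)"
    using \<open>0 < \<bar>x\<bar>\<close> by (simp add: powr_add[symmetric])
  also have "\<dots> \<le> \<bar>x\<bar> powr s * R powr (2 - s)"
    using False assms by (intro mult_left_mono powr_mono2') auto
  finally show ?thesis using zero_le_power2[of R] by linarith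
qed

lemma gaussian_excess_le:
  fixes x y L R s :: real
  assumes "0 \<le> y" "\<bar>y - phi x\<bar> \<le> L" "0 < R" "2 \<le> s"
  shows "max 0 (y - phi x) * (y - ln (phi x))
    \<le> (1 + ln (sqrt (2 * pi)) + L + R^2 / 2) * \<bar>y - phi x\<bar>
      + R powr (2 - s) / 2 * (\<bar>x\<bar> powr s * y)"
proof -
  define m where "m = max 0 (y - phi x)"
  define c where "c = ln (sqrt (2 * pi))"
  have "0 < c" unfolding c_def using pi_gt3 by simp
  have m: "0 \<le> m" "m \<le> \<bar>y - phi x\<bar>" "m \<le> y"
    unfolding m_def using assms(1) phi_pos[of x] by auto
  have "y \<le> 1 + L" using assms(2) phi_le_one[of x] by simp
  then have "m * y \<le> \<bar>y - phi x\<bar> * (1 + L)"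
    using m assms(1) by (intro mult_mono) auto
  moreover have "m * c \<le> \<bar>y - phi x\<bar> * c"
    using m \<open>0 < c\<close> by (intro mult_right_mono) auto
  moreover have "m * x^2 \<le> \<bar>y - phi x\<bar> * R^2 + y * (\<bar>x\<bar> powr s * R powr (2 - s))"
  proof -
    have "m * x^2 \<le> m * R^2 + m * (\<bar>x\<bar> powr s * R powr (2 - s))"
      using power2_le_truncation_bound[OF assms(3,4), of x] m
      by (simp add: distrib_left[symmetric] mult_left_mono)
    also have "\<dots> \<le> \<bar>y - phi x\<bar> * R^2 + y * (\<bar>x\<bar> powr s * R powr (2 - s))"
      using m by (intro add_mono mult_right_mono) auto
    finally show ?thesis .
  qed
  moreover have "m * (y - ln (phi x)) = m * y + m * c + m * x^2 / 2"
    unfolding ln_phi c_def by (simp add: algebra_simps)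
  ultimately show ?thesis
    unfolding m_def[symmetric] c_def[symmetric] by (simp add: algebra_simps)
qed

lemma KL_div_le_excess:
  assumes "\<And>x. 0 \<le> p x"
  shows "KL_div p
    \<le> enn2ereal (\<integral>\<^sup>+ x. ennreal (max 0 (p x - phi x) * (p x - ln (phi x))) \<partial>lborel)"
proof -
  have "KL_div p \<le> enn2ereal (\<integral>\<^sup>+ x. ennreal (p x * ln (p x / phi x)) \<partial>lborel)"
    unfolding KL_div_def ext_integral_def by (rule ereal_diff_le_self) simp
  also have "\<dots> \<le> enn2ereal (\<integral>\<^sup>+ x. ennreal (max 0 (p x - phi x) * (p x - ln (phi x))) \<partial>lborel)"
    unfolding less_eq_ennreal.rep_eq[symmetric]
    by (intro nn_integral_mono ennreal_leI mult_ln_divide_le phi_pos assms)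
  finally show ?thesis .
qed

lemma KL_div_nonpos_if_AE_eq_phi:
  assumes "AE x in lborel. p x = phi x" "\<And>x. 0 \<le> p x"
  shows "KL_div p \<le> 0"
proof -
  have "AE x in lborel. ennreal (max 0 (p x - phi x) * (p x - ln (phi x))) = 0"
    using assms(1) by eventually_elim simp
  then have "(\<integral>\<^sup>+ x. ennreal (max 0 (p x - phi x) * (p x - ln (phi x))) \<partial>lborel) = 0"
    by (simp add: nn_integral_cong_AE)
  then show ?thesis
    using KL_div_le_excess[of p] assms(2) by (simp add: zero_ennreal.rep_eq)
qed

lemma KL_div_le_moment_split:
  fixes p :: "real \<Rightarrow> real" and L R s :: real
  assumes p_nonneg: "\<And>x. 0 \<le> p x" and "integrable lborel p"
    and "integrable lborel (\<lambda>x. \<bar>x\<bar> powr s * p x)"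
    and "AE x in lborel. \<bar>p x - phi x\<bar> \<le> L" "0 \<le> L" "0 < R" "2 \<le> s"
  shows "KL_div p \<le> ereal ((1 + ln (sqrt (2 * pi)) + L + R^2 / 2) * (\<integral>x. \<bar>p x - phi x\<bar> \<partial>lborel)
    + R powr (2 - s) / 2 * (\<integral>x. \<bar>x\<bar> powr s * p x \<partial>lborel))"
proof -
  define a where "a = 1 + ln (sqrt (2 * pi)) + L + R^2 / 2"
  define b where "b = R powr (2 - s) / 2"
  define g where "g x = a * \<bar>p x - phi x\<bar> + b * (\<bar>x\<bar> powr s * p x)" for x
  have "0 \<le> a" "0 \<le> b" unfolding a_def b_def using pi_gt3 \<open>0 \<le> L\<close> by auto
  have int_f: "integrable lborel (\<lambda>x. p x - phi x)"
    using assms(2) integrable_phi by (rule Bochner_Integration.integrable_diff)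
  have "KL_div p
      \<le> enn2ereal (\<integral>\<^sup>+ x. ennreal (max 0 (p x - phi x) * (p x - ln (phi x))) \<partial>lborel)"
    using p_nonneg by (rule KL_div_le_excess)
  also have "\<dots> \<le> enn2ereal (\<integral>\<^sup>+ x. ennreal (g x) \<partial>lborel)"
  proof -
    have "AE x in lborel. max 0 (p x - phi x) * (p x - ln (phi x)) \<le> g x"
      using assms(4) unfolding g_def a_def b_def
      by eventually_elim (rule gaussian_excess_le; use p_nonneg assms(5-7) in simp)
    then show ?thesis unfolding less_eq_ennreal.rep_eq[symmetric]
      by (intro nn_integral_mono_AE) (auto elim!: eventually_mono intro: ennreal_leI)
  qed
  also have "(\<integral>\<^sup>+ x. ennreal (g x) \<partial>lborel) = ennreal (integral\<^sup>L lborel g)"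
    using int_f assms(3) \<open>0 \<le> a\<close> \<open>0 \<le> b\<close> p_nonneg unfolding g_def
    by (intro nn_integral_eq_integral) (auto intro!: integrable_abs)
  also have "integral\<^sup>L lborel g
      = a * (\<integral>x. \<bar>p x - phi x\<bar> \<partial>lborel) + b * (\<integral>x. \<bar>x\<bar> powr s * p x \<partial>lborel)"
    using int_f assms(3) unfolding g_def by (simp add: integrable_abs)
  also have "enn2ereal (ennreal \<dots>)
      = ereal (a * (\<integral>x. \<bar>p x - phi x\<bar> \<partial>lborel) + b * (\<integral>x. \<bar>x\<bar> powr s * p x \<partial>lborel))"
    using \<open>0 \<le> a\<close> \<open>0 \<le> b\<close> p_nonneg by (intro enn2ereal_ennreal) auto
  finally show ?thesis unfolding a_def b_def .
qed

lemma abs_moment_pos: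
  fixes p :: "real \<Rightarrow> real"
  assumes "\<And>x. 0 \<le> p x" "integrable lborel (\<lambda>x. \<bar>x\<bar> powr s * p x)"
    and "(\<integral>x. p x \<partial>lborel) = 1"
  shows "0 < (\<integral>x. \<bar>x\<bar> powr s * p x \<partial>lborel)"
proof (rule ccontr)
  assume "\<not> ?thesis"
  then have "(\<integral>x. \<bar>x\<bar> powr s * p x \<partial>lborel) = 0"
    using assms(1) by (smt (verit) Bochner_Integration.integral_nonneg mult_nonneg_nonneg powr_ge_zero)
  then have "AE x in lborel. \<bar>x\<bar> powr s * p x = 0"
    using integral_nonneg_eq_0_iff_AE[of lborel "\<lambda>x. \<bar>x\<bar> powr s * p x"] assms(1,2) by simp
  then have "AE x in lborel. p x = 0"
    using AE_lborel_singleton[of 0] by eventually_elim simp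
  then have "(\<integral>x. p x \<partial>lborel) = 0" by (rule integral_eq_zero_AE)
  then show False using assms(3) by simp
qed

lemma powr_balance:
  fixes M d s :: real
  assumes "0 < M" "0 < d" "0 < s"
  defines "R \<equiv> (M / d) powr (1 / s)"
  shows "R^2 / 2 * d + R powr (2 - s) / 2 * M = M powr (2 / s) * d powr (1 - 2 / s)"
proof -
  have T: "(M / d) powr (2 / s) * d = M powr (2 / s) * d powr (1 - 2 / s)"
    using assms by (simp add: powr_divide powr_diff)
  have "R^2 = (M / d) powr (2 / s)"
    unfolding R_def using assms by (simp add: powr_powr flip: powr_numeral)
  moreover have "R powr (2 - s) * M = (M / d) powr (2 / s) * d"
  proof -
    have "R powr (2 - s) = (M / d) powr (2 / s - 1)"
      unfolding R_def powr_powr using assms by (simp add: diff_divide_distrib)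
    also have "\<dots> = (M / d) powr (2 / s) / (M / d)" using assms by (simp add: powr_diff)
    finally show ?thesis using assms by (simp add: field_simps)
  qed
  ultimately show ?thesis using T by (simp add: field_simps)
qed

lemma KL_div_le_balanced:
  fixes p :: "real \<Rightarrow> real" and L d s :: real
  assumes p_nonneg: "\<And>x. 0 \<le> p x" and "integrable lborel p" "(\<integral>x. p x \<partial>lborel) = 1"
    and "integrable lborel (\<lambda>x. \<bar>x\<bar> powr s * p x)" "2 < s"
    and "AE x in lborel. \<bar>p x - phi x\<bar> \<le> L" "0 \<le> L"
    and "(\<integral>x. \<bar>p x - phi x\<bar> \<partial>lborel) \<le> d" "0 < d"
  shows "KL_div p \<le> ereal ((1 + ln (sqrt (2 * pi)) + L) * d
    + (\<integral>x. \<bar>x\<bar> powr s * p x \<partial>lborel) powr (2 / s) * d powr (1 - 2 / s))"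
proof -
  define c where "c = 1 + ln (sqrt (2 * pi)) + L"
  define M where "M = (\<integral>x. \<bar>x\<bar> powr s * p x \<partial>lborel)"
  define R where "R = (M / d) powr (1 / s)"
  have "0 < M" unfolding M_def using p_nonneg assms(4,3) by (rule abs_moment_pos)
  then have "0 < R" unfolding R_def using \<open>0 < d\<close> by simp
  have "0 \<le> c" unfolding c_def using pi_gt3 \<open>0 \<le> L\<close> by simp
  have "KL_div p \<le> ereal ((c + R^2 / 2) * (\<integral>x. \<bar>p x - phi x\<bar> \<partial>lborel) + R powr (2 - s) / 2 * M)"
    unfolding c_def M_def
    using KL_div_le_moment_split[OF p_nonneg assms(2,4,6,7) \<open>0 < R\<close>] \<open>2 < s\<close> by simp
  also have "(c + R^2 / 2) * (\<integral>x. \<bar>p x - phi x\<bar> \<partial>lborel) + R powr (2 - s) / 2 * M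
      \<le> c * d + (R^2 / 2 * d + R powr (2 - s) / 2 * M)"
    using mult_left_mono[OF assms(8), of "c + R^2 / 2"] \<open>0 \<le> c\<close> by (simp add: algebra_simps)
  also have "\<dots> = c * d + M powr (2 / s) * d powr (1 - 2 / s)"
    unfolding R_def using \<open>0 < M\<close> \<open>0 < d\<close> \<open>2 < s\<close> by (subst powr_balance) auto
  finally show ?thesis unfolding c_def M_def by simp
qed

lemma KL_div_le_norm_bound:
  fixes p :: "real \<Rightarrow> real" and s :: real
  assumes p_nonneg: "\<And>x. 0 \<le> p x" and "integrable lborel p" "(\<integral>x. p x \<partial>lborel) = 1"
    and "integrable lborel (\<lambda>x. \<bar>x\<bar> powr s * p x)" "2 < s"
    and "Lq_norm 2 (\<lambda>x. p x - phi x) \<noteq> \<infinity>"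
  shows "KL_div p \<le>
          (ereal (1 + ln (sqrt (2 * pi))) + Linf_norm (\<lambda>x. p x - phi x))
            * (Lq_norm 1 (\<lambda>x. p x - phi x) + Lq_norm 2 (\<lambda>x. p x - phi x))
        + ereal ((\<integral>x. \<bar>x\<bar> powr s * p x \<partial>lborel) powr (2 / s)
            * (real_of_ereal (Lq_norm 1 (\<lambda>x. p x - phi x) + Lq_norm 2 (\<lambda>x. p x - phi x)))
                powr (1 - 2 / s))"
proof -
  define f where "f x = p x - phi x" for x
  define N1 where "N1 = (\<integral>x. \<bar>f x\<bar> \<partial>lborel)"
  have "0 \<le> N1" unfolding N1_def by simp
  have "integrable lborel f"
    unfolding f_def using assms(2) integrable_phi by (rule Bochner_Integration.integrable_diff)
  then have N1: "Lq_norm 1 f = ereal N1" unfolding N1_def by (rule Lq_norm_1_eq_integral)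
  obtain N2 where N2: "0 \<le> N2" "Lq_norm 2 f = ereal N2"
    using assms(6) Lq_norm_finite unfolding f_def[abs_def] by blast
  show ?thesis
  proof (cases "N1 + N2 = 0")
    case True
    then have "AE x in lborel. p x = phi x"
      using integral_nonneg_eq_0_iff_AE[of lborel "\<lambda>x. \<bar>f x\<bar>"] \<open>integrable lborel f\<close>
        \<open>0 \<le> N1\<close> N2(1) unfolding N1_def f_def by simp
    then have "KL_div p \<le> 0" using p_nonneg by (rule KL_div_nonpos_if_AE_eq_phi)
    then show ?thesis
      using N1 N2 True \<open>0 \<le> N1\<close> unfolding f_def[abs_def] by (simp add: zero_ereal_def[symmetric])
  next
    case False
    then have "0 < N1 + N2" using \<open>0 \<le> N1\<close> N2(1) by simp
    show ?thesis
    proof (cases "Linf_norm f")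
      case (real L)
      have "0 \<le> L" using Linf_norm_nonneg[of f] real by simp
      have "AE x in lborel. \<bar>p x - phi x\<bar> \<le> L"
        using AE_le_Linf_norm[of f] real unfolding f_def by simp
      from KL_div_le_balanced[OF p_nonneg assms(2-5) this \<open>0 \<le> L\<close> _ \<open>0 < N1 + N2\<close>]
      show ?thesis using N1 N2 real unfolding N1_def f_def[abs_def] by simp
    next
      case PInf
      then show ?thesis using N1 N2 \<open>0 < N1 + N2\<close> unfolding f_def[abs_def] by simp
    next
      case MInf
      then show ?thesis using Linf_norm_nonneg[of f] by simp
    qed
  qed
qed

theorem corollary2p3:
  fixes s :: real
  assumes "s > 2"
  shows "\<exists>C1>0. \<exists>C2>0. \<forall>p :: real \<Rightarrow> real.
    (p \<in> borel_measurable borel \<and> (\<forall>x. 0 \<le> p x) \<and>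
     integrable lborel p \<and> (\<integral>x. p x \<partial>lborel) = 1 \<and>
     integrable lborel (\<lambda>x. x * p x) \<and> (\<integral>x. x * p x \<partial>lborel) = 0 \<and>
     integrable lborel (\<lambda>x. x ^ 2 * p x) \<and> (\<integral>x. x ^ 2 * p x \<partial>lborel) = 1 \<and>
     integrable lborel (\<lambda>x. \<bar>x\<bar> powr s * p x) \<and>
     Lq_norm 2 (\<lambda>x. p x - phi x) \<le> 1)
    \<longrightarrow> KL_div p \<le>
          (ereal C1 + Linf_norm (\<lambda>x. p x - phi x))
            * (Lq_norm 1 (\<lambda>x. p x - phi x) + Lq_norm 2 (\<lambda>x. p x - phi x))
        + ereal (C2 * (\<integral>x. \<bar>x\<bar> powr s * p x \<partial>lborel) powr (2 / s)
            * (real_of_ereal (Lq_norm 1 (\<lambda>x. p x - phi x) + Lq_norm 2 (\<lambda>x. p x - phi x)))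
                powr (1 - 2 / s))"
proof (rule exI[of _ "1 + ln (sqrt (2 * pi))"], intro conjI exI[of _ 1] allI impI)
  show "0 < 1 + ln (sqrt (2 * pi))" using pi_gt3 by (simp add: add_pos_nonneg)
qed (auto intro!: KL_div_le_norm_bound assms)

end
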